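(* Suppose an ordered linear probing hash table with $n$ slots initially contains $(1-\epsilon)n$ keys (inserted into an empty table, with fully random hashes) and no tombstones. Let $c$ be a sufficiently large constant. Then for any interval $P\subseteq[n]$ with $|P|\ge c\,\epsilon^{-2}\log\epsilon^{-1}$, with probability $1-1/\mathrm{poly}(|P|)$ the interval $P$ contains $\Omega(\epsilon|P|)$ free slots.
   Context: Ordered linear probing: slots $1,\dots,n$; an inserted key $u$ is placed in the run starting at or covering $h(u)$ so that keys in each maximal run of occupied slots are stored in order of hash, shifting later keys right to the first free slot. $h$ is uniform and fully independent. "With probability $1-1/\mathrm{poly}(j)$" means for every constant $c'>0$, probability $1-O(j^{-c'})$. *)

theory Defs
  imports "HOL-Probability.Probability"
begin

text \<open>Ordered linear probing on a cyclic table with slots 0,...,n-1.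
  A table is a map from slots to the hash value of the key stored there
  (None = free slot).  Only hash values matter for the positions of keys;
  keys with equal hash are kept in insertion order.\<close>

type_synonym table = "nat \<Rightarrow> nat option"

definition cdist :: "nat \<Rightarrow> nat \<Rightarrow> nat \<Rightarrow> nat" where
  "cdist n a b = (b + n - a) mod n"

text \<open>Offset (from x) of the slot where a new key with hash x is placed:
  the first slot, scanning forward from x, that is free or holds a key whose
  hash comes strictly after x in the run (i.e. whose displacement is smaller
  than the distance from x).\<close>
definition ins_offset :: "nat \<Rightarrow> table \<Rightarrow> nat \<Rightarrow> nat" where
  "ins_offset n T x = (LEAST d. case T ((x + d) mod n) of
       None \<Rightarrow> True
     | Some y \<Rightarrow> cdist n y ((x + d) mod n) < d)"

definition free_offset :: "nat \<Rightarrow> table \<Rightarrow> nat \<Rightarrow> nat" where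
  "free_offset n T q = (LEAST e. T ((q + e) mod n) = None)"

definition olp_insert :: "nat \<Rightarrow> table \<Rightarrow> nat \<Rightarrow> table" where
  "olp_insert n T x =
     (if (\<forall>s<n. T s \<noteq> None) then T else
      (let q = (x + ins_offset n T x) mod n;
           e = free_offset n T q
       in (\<lambda>s. if s < n then
                  (let k = cdist n q s in
                   if k = 0 then Some x
                   else if k \<le> e then T ((s + n - 1) mod n)
                   else T s)
                else T s)))"

definition olp_table :: "nat \<Rightarrow> nat list \<Rightarrow> table" where
  "olp_table n hs = fold (\<lambda>x T. olp_insert n T x) hs (\<lambda>_. None)"

definition hash_dist :: "nat \<Rightarrow> nat \<Rightarrow> nat list pmf" where
  "hash_dist n m = pmf_of_set {hs. length hs = m \<and> set hs \<subseteq> {0..<n}}"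

definition free_slots :: "table \<Rightarrow> nat set \<Rightarrow> nat set" where
  "free_slots T P = {s \<in> P. T s = None}"

end

theory Submission
  imports Defs
begin

text \<open>Extend the interval \<open>[a, b)\<close> in both directions up to the nearest free slots. If
  there are none, all \<open>\<epsilon> n\<close> free slots lie in the interval. Otherwise the extended window
  \<open>W\<close> is bounded by free slots, and since in ordered linear probing every key sits in the
  occupied stretch that starts at its hash, a key lies in \<open>W\<close> iff its hash does. Hence the
  number of hashes in \<open>W\<close> plus the number of free slots in \<open>[a, b)\<close> equals \<open>|W|\<close>, and few
  free slots force at least \<open>(1 - \<epsilon>/2)|W|\<close> of the hashes into \<open>W\<close>, against an expected
  \<open>(1 - \<epsilon>)|W|\<close>. A Chernoff bound makes this happen with probability at most
  \<open>exp (- \<epsilon>^2 |W| / 16)\<close>; summing over all extensions gives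
  \<open>O (\<epsilon>^(-4) exp (- \<epsilon>^2 (b - a) / 16))\<close>, which is \<open>O ((b - a)^(-c'))\<close> as soon as
  \<open>b - a \<ge> c \<epsilon>^(-2) ln (1/\<epsilon>)\<close> with \<open>c\<close> large compared to \<open>c'\<close>.\<close>

lemma cdist_less: "0 < n \<Longrightarrow> cdist n a b < n"
  unfolding cdist_def by simp

lemma mod_add_cdist: "a < n \<Longrightarrow> b < n \<Longrightarrow> (a + cdist n a b) mod n = b"
  unfolding cdist_def by (simp add: mod_add_right_eq)

lemma cdist_mod_add:
  assumes "a < n" "d < n"
  shows "cdist n a ((a + d) mod n) = d"
proof -
  have "((a + d) mod n + n - a) mod n = ((a + d) mod n + (n - a)) mod n" using assms by simp
  also have "\<dots> = (a + d + (n - a)) mod n" by (simp add: mod_add_left_eq)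
  also have "a + d + (n - a) = d + n" using assms by simp
  finally show ?thesis unfolding cdist_def using assms by simp
qed

lemma cdist_trans_mod:
  assumes "p < n" "y < n" "s < n"
  shows "cdist n p s = (cdist n p y + cdist n y s) mod n"
proof -
  have "(cdist n p y + cdist n y s) mod n = (y + n - p + (s + n - y)) mod n"
    unfolding cdist_def by (simp add: mod_add_eq)
  also have "y + n - p + (s + n - y) = (s + n - p) + n" using assms by simp
  finally show ?thesis unfolding cdist_def by simp
qed

lemma card_cyclic_window:
  assumes "p < n" "l \<le> n"
  shows "card {s. s < n \<and> cdist n p s < l} = l"
proof -
  have "bij_betw (\<lambda>k. (p + k) mod n) {..<l} {s. s < n \<and> cdist n p s < l}"
  proof (rule bij_betw_byWitness[where f' = "cdist n p"])
    show "\<forall>k\<in>{..<l}. cdist n p ((p + k) mod n) = k"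
      using assms by (simp add: cdist_mod_add)
    show "\<forall>s\<in>{s. s < n \<and> cdist n p s < l}. (p + cdist n p s) mod n = s"
      using assms by (simp add: mod_add_cdist)
    show "(\<lambda>k. (p + k) mod n) ` {..<l} \<subseteq> {s. s < n \<and> cdist n p s < l}"
      using assms by (auto simp: cdist_mod_add)
    show "cdist n p ` {s. s < n \<and> cdist n p s < l} \<subseteq> {..<l}" by auto
  qed
  then show ?thesis by (simp add: bij_betw_same_card[symmetric])
qed

section \<open>Invariants of ordered linear probing\<close>

definition olp_invariant :: "nat \<Rightarrow> table \<Rightarrow> bool" where
  "olp_invariant n T \<longleftrightarrow> (\<forall>s\<ge>n. T s = None) \<and>
     (\<forall>s y. s < n \<longrightarrow> T s = Some y \<longrightarrow> y < n \<and> (\<forall>k\<le>cdist n y s. T ((y + k) mod n) \<noteq> None))"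

definition slot_mset :: "nat \<Rightarrow> table \<Rightarrow> nat option multiset" where
  "slot_mset n T = mset (map T [0..<n])"

lemma mset_rotate: "mset (rotate k xs) = mset xs"
  by (metis append_take_drop_id mset_append rotate_drop_take union_commute)

lemma slot_mset_rotate: "mset (map (\<lambda>k. T ((q + k) mod n)) [0..<n]) = slot_mset n T"
proof -
  have "map (\<lambda>k. T ((q + k) mod n)) [0..<n] = rotate q (map T [0..<n])"
    by (rule nth_equalityI) (simp_all add: nth_rotate add.commute)
  then show ?thesis unfolding slot_mset_def by (simp add: mset_rotate)
qed

lemma olp_invariant_cdist_next:
  assumes inv: "olp_invariant n T" and free: "s0 < n" "T s0 = None"
    and key: "s < n" "T s = Some y"
  shows "cdist n y ((s + 1) mod n) = cdist n y s + 1"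
proof -
  have n: "0 < n" using free by simp
  have y: "y < n" and path: "\<And>k. k \<le> cdist n y s \<Longrightarrow> T ((y + k) mod n) \<noteq> None"
    using inv key unfolding olp_invariant_def by blast+
  have "cdist n y s + 1 < n"
  proof (rule ccontr)
    assume "\<not> cdist n y s + 1 < n"
    then have "cdist n y s0 \<le> cdist n y s" using cdist_less[OF n, of y s0] by simp
    then show False using path mod_add_cdist[OF y free(1)] free(2) by metis
  qed
  moreover have "(s + 1) mod n = (y + (cdist n y s + 1)) mod n"
    using mod_add_cdist[OF y key(1)] by (metis add.assoc mod_Suc_eq Suc_eq_plus1)
  ultimately show ?thesis using cdist_mod_add[OF y, of "cdist n y s + 1"] by simp
qed

locale olp_insertion =
  fixes n :: nat and T :: table and x s0 :: nat
  assumes invariant: "olp_invariant n T"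
    and hash_less: "x < n" and free_slot: "s0 < n" "T s0 = None"
begin

lemma n_pos: "0 < n"
  using free_slot by simp

definition ins_slot :: nat where
  "ins_slot = (x + ins_offset n T x) mod n"

definition shift_len :: nat where
  "shift_len = free_offset n T ins_slot"

lemma ins_offset_less: "ins_offset n T x < n"
proof -
  have "ins_offset n T x \<le> cdist n x s0"
    unfolding ins_offset_def by (rule Least_le) (simp add: mod_add_cdist hash_less free_slot)
  then show ?thesis using cdist_less[OF n_pos] le_less_trans by blast
qed

lemma occupied_before_ins_slot:
  assumes "d < ins_offset n T x"
  shows "T ((x + d) mod n) \<noteq> None"
proof
  assume "T ((x + d) mod n) = None"
  then show False using not_less_Least[OF assms[unfolded ins_offset_def]] by simp
qed

lemma ins_slot_less: "ins_slot < n"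
  unfolding ins_slot_def using n_pos by simp

lemma shift_len_less: "shift_len < n"
proof -
  have "shift_len \<le> cdist n ins_slot s0"
    unfolding shift_len_def free_offset_def
    by (rule Least_le) (simp add: mod_add_cdist ins_slot_less free_slot)
  then show ?thesis using cdist_less[OF n_pos] le_less_trans by blast
qed

lemma free_at_shift_end: "T ((ins_slot + shift_len) mod n) = None"
  unfolding shift_len_def free_offset_def
  by (rule LeastI[of _ "cdist n ins_slot s0"]) (simp add: mod_add_cdist ins_slot_less free_slot)

lemma occupied_shifted: "d < shift_len \<Longrightarrow> T ((ins_slot + d) mod n) \<noteq> None"
  using not_less_Least[of d] unfolding shift_len_def free_offset_def by blast

lemma olp_insert_at:
  assumes k: "k < n"
  shows "olp_insert n T x ((ins_slot + k) mod n) =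
    (if k = 0 then Some x else if k \<le> shift_len then T ((ins_slot + (k - 1)) mod n)
     else T ((ins_slot + k) mod n))"
proof -
  have not_full: "\<not> (\<forall>s<n. T s \<noteq> None)" using free_slot by blast
  have insert_eq: "olp_insert n T x = (\<lambda>s. if s < n then
      (let k = cdist n ins_slot s in
       if k = 0 then Some x else if k \<le> shift_len then T ((s + n - 1) mod n) else T s)
      else T s)"
    unfolding olp_insert_def ins_slot_def shift_len_def by (subst if_not_P[OF not_full]) (simp only: Let_def)
  have "((ins_slot + k) mod n + n - 1) mod n = (ins_slot + (k - 1)) mod n" if "0 < k"
  proof -
    have "((ins_slot + k) mod n + n - 1) mod n = ((ins_slot + k) mod n + (n - 1)) mod n"
      using n_pos by simp
    also have "\<dots> = (ins_slot + k + (n - 1)) mod n" by (simp add: mod_add_left_eq)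
    also have "ins_slot + k + (n - 1) = ins_slot + (k - 1) + n" using that n_pos by simp
    finally show ?thesis by simp
  qed
  then show ?thesis
    unfolding insert_eq using cdist_mod_add[OF ins_slot_less k] n_pos by (simp add: Let_def)
qed

lemma olp_insert_slot_cases:
  assumes "s < n"
  obtains k where "k < n" "s = (ins_slot + k) mod n"
  using mod_add_cdist[OF ins_slot_less assms] cdist_less[OF n_pos] by metis

lemma olp_insert_beyond: "n \<le> s \<Longrightarrow> olp_insert n T x s = T s"
  unfolding olp_insert_def by (simp add: Let_def)

lemma olp_insert_occupied:
  assumes "s < n" "T s \<noteq> None"
  shows "olp_insert n T x s \<noteq> None"
proof -
  obtain k where k: "k < n" "s = (ins_slot + k) mod n" using olp_insert_slot_cases assms(1) .
  show ?thesis using olp_insert_at[OF k(1)] occupied_shifted[of "k - 1"] assms(2)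
    unfolding k(2) by (auto split: if_splits)
qed

text \<open>A key now at slot \<open>s\<close> was either inserted at the end of the occupied stretch
  following its hash, or moved one slot to the right from such a position.\<close>
lemma olp_insert_key:
  assumes s: "s < n" and key: "olp_insert n T x s = Some y"
  shows "y < n \<and> (\<forall>j<cdist n y s. T ((y + j) mod n) \<noteq> None)"
proof -
  obtain k where k: "k < n" "s = (ins_slot + k) mod n" using olp_insert_slot_cases s .
  consider "k = 0" | "0 < k" "k \<le> shift_len" | "shift_len < k" by linarith
  then show ?thesis
  proof cases
    case 1
    then have "y = x" "s = ins_slot" using key olp_insert_at[OF k(1)] k(2) ins_slot_less by auto
    moreover have "cdist n x ins_slot = ins_offset n T x"
      unfolding ins_slot_def using cdist_mod_add[OF hash_less ins_offset_less] .
    ultimately show ?thesis using hash_less occupied_before_ins_slot by simp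
  next
    case 2
    define s' where "s' = (ins_slot + (k - 1)) mod n"
    have s': "s' < n" "T s' = Some y"
      using key olp_insert_at[OF k(1)] 2 n_pos unfolding s'_def k(2) by auto
    have "s = (s' + 1) mod n" using 2 k(2) unfolding s'_def by (simp add: mod_Suc_eq)
    then have "cdist n y s = cdist n y s' + 1"
      using olp_invariant_cdist_next[OF invariant free_slot s'] by simp
    then show ?thesis using invariant s' unfolding olp_invariant_def by force
  next
    case 3
    then have "T s = Some y" using key olp_insert_at[OF k(1)] k(2) by simp
    then show ?thesis using invariant s unfolding olp_invariant_def by force
  qed
qed

lemma olp_insert_invariant: "olp_invariant n (olp_insert n T x)"
proof -
  have "olp_insert n T x ((y + k) mod n) \<noteq> None"
    if s: "s < n" and key: "olp_insert n T x s = Some y" and k: "k \<le> cdist n y s" for s y k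
  proof (cases "k = cdist n y s")
    case True
    then show ?thesis using mod_add_cdist[of y n s] olp_insert_key[OF s key] s key by simp
  next
    case False
    then show ?thesis using olp_insert_key[OF s key] olp_insert_occupied n_pos k by simp
  qed
  moreover have "olp_insert n T x s = None" if "n \<le> s" for s
    using that olp_insert_beyond invariant unfolding olp_invariant_def by simp
  ultimately show ?thesis unfolding olp_invariant_def using olp_insert_key by blast
qed

lemma slot_mset_olp_insert:
  "slot_mset n (olp_insert n T x) = slot_mset n T - {#None#} + {#Some x#}"
proof -
  define L where "L = map (\<lambda>k. T ((ins_slot + k) mod n)) [0..<n]"
  define L' where "L' = map (\<lambda>k. olp_insert n T x ((ins_slot + k) mod n)) [0..<n]"
  have L'_eq: "L' = Some x # take shift_len L @ drop (Suc shift_len) L"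
    by (rule nth_equalityI)
      (use shift_len_less in \<open>auto simp: L_def L'_def olp_insert_at nth_append nth_Cons' min_def\<close>)
  have "L = take shift_len L @ L ! shift_len # drop (Suc shift_len) L"
    by (rule id_take_nth_drop) (simp add: L_def shift_len_less)
  moreover have "L ! shift_len = None"
    using shift_len_less free_at_shift_end by (simp add: L_def)
  ultimately have "mset L = mset (take shift_len L) + {#None#} + mset (drop (Suc shift_len) L)"
    by (metis add.commute mset.simps(2) mset_append add_mset_add_single union_assoc)
  then show ?thesis
    using slot_mset_rotate[of T ins_slot n] slot_mset_rotate[of "olp_insert n T x" ins_slot n]
    unfolding L_def[symmetric] L'_def[symmetric] L'_eq by simp
qed

end

lemma olp_table_invariant_slot_mset:
  assumes "set hs \<subseteq> {0..<n}" "length hs < n"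
  shows "olp_invariant n (olp_table n hs) \<and>
    slot_mset n (olp_table n hs) = mset (map Some hs) + replicate_mset (n - length hs) None"
  using assms
proof (induction hs rule: rev_induct)
  case Nil
  have "slot_mset n (\<lambda>_. None) = replicate_mset n None"
    unfolding slot_mset_def by (simp add: map_replicate_const mset_replicate)
  then show ?case unfolding olp_table_def olp_invariant_def by simp
next
  case (snoc x hs)
  define T where "T = olp_table n hs"
  have IH: "olp_invariant n T" "slot_mset n T = mset (map Some hs) + replicate_mset (n - length hs) None"
    using snoc unfolding T_def by auto
  have x: "x < n" using snoc.prems by auto
  have "None \<in># slot_mset n T" using IH(2) snoc.prems by simp
  then obtain s0 where "s0 < n" "T s0 = None" unfolding slot_mset_def by auto
  then interpret olp_insertion n T x s0 using IH(1) x by unfold_locales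
  have "olp_table n (hs @ [x]) = olp_insert n T x" unfolding olp_table_def T_def by simp
  moreover have "n - length hs = Suc (n - length (hs @ [x]))" using snoc.prems by simp
  ultimately show ?case using olp_insert_invariant slot_mset_olp_insert IH(2) by simp
qed

lemma card_slots_with:
  assumes "slot_mset n T = mset (map Some hs) + replicate_mset k None"
  shows "card {s. s < n \<and> P (T s)} = length (filter (\<lambda>h. P (Some h)) hs) + (if P None then k else 0)"
proof -
  have "card {s. s < n \<and> P (T s)} = length (filter P (map T [0..<n]))"
    unfolding length_filter_conv_card by (intro arg_cong[where f = card]) auto
  also have "\<dots> = size (filter_mset P (slot_mset n T))"
    unfolding slot_mset_def by (metis mset_filter size_mset)
  also have "\<dots> = size (filter_mset P (mset (map Some hs))) + size (filter_mset P (replicate_mset k None))"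
    by (simp only: assms filter_union_mset size_union)
  also have "size (filter_mset P (mset (map Some hs))) = length (filter (\<lambda>h. P (Some h)) hs)"
    by (induction hs) auto
  also have "size (filter_mset P (replicate_mset k None)) = (if P None then k else 0)"
    by (induction k) auto
  finally show ?thesis .
qed

section \<open>Free slots near an interval\<close>

text \<open>A key and its hash lie on the same side of a window whose two neighbouring slots are
  free, since the occupied stretch from the hash to the key cannot pass a free slot.\<close>
lemma key_in_window_iff:
  assumes inv: "olp_invariant n T" and p: "p < n" and l: "l < n"
    and free_before: "T ((p + n - 1) mod n) = None" and free_after: "T ((p + l) mod n) = None"
    and key: "s < n" "T s = Some y"
  shows "cdist n p y < l \<longleftrightarrow> cdist n p s < l"
proof -
  have n: "0 < n" using p by simp
  have y: "y < n" and path: "\<And>k. k \<le> cdist n y s \<Longrightarrow> T ((y + k) mod n) \<noteq> None"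
    using inv key unfolding olp_invariant_def by blast+
  define j where "j = cdist n p y"
  define D where "D = cdist n y s"
  have j: "j < n" unfolding j_def using cdist_less[OF n] .
  have path_from_p: "T ((p + (j + k)) mod n) \<noteq> None" if "k \<le> D" for k
  proof -
    have "(y + k) mod n = ((p + j) mod n + k) mod n"
      using mod_add_cdist[OF p y] unfolding j_def by simp
    also have "\<dots> = (p + (j + k)) mod n" by (simp add: mod_add_left_eq add.assoc)
    finally show ?thesis using path that unfolding D_def by metis
  qed
  have s_dist: "cdist n p s = (j + D) mod n"
    unfolding j_def D_def using cdist_trans_mod[OF p y key(1)] .
  show ?thesis unfolding s_dist j_def[symmetric]
  proof
    assume "j < l"
    show "(j + D) mod n < l"
    proof (rule ccontr)
      assume "\<not> (j + D) mod n < l"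
      then have "l - j \<le> D" using mod_less_eq_dividend[of "j + D" n] by linarith
      then show False using path_from_p[of "l - j"] free_after \<open>j < l\<close> by simp
    qed
  next
    assume "(j + D) mod n < l"
    show "j < l"
    proof (rule ccontr)
      assume "\<not> j < l"
      then have "n \<le> j + D" using \<open>(j + D) mod n < l\<close> by (cases "j + D < n") simp_all
      then have "n - 1 - j \<le> D" by simp
      moreover have "p + (j + (n - 1 - j)) = p + n - 1" using j by simp
      ultimately show False using path_from_p[of "n - 1 - j"] free_before by simp
    qed
  qed
qed

lemma keys_plus_free_slots_in_window:
  assumes inv: "olp_invariant n T"
    and slots: "slot_mset n T = mset (map Some hs) + replicate_mset k None"
    and p: "p < n" and l: "l < n"
    and free_before: "T ((p + n - 1) mod n) = None" and free_after: "T ((p + l) mod n) = None"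
  shows "length (filter (\<lambda>h. cdist n p h < l) hs)
    + card {s. s < n \<and> cdist n p s < l \<and> T s = None} = l"
proof -
  have "{s. s < n \<and> cdist n p s < l \<and> T s \<noteq> None} =
      {s. s < n \<and> (case T s of None \<Rightarrow> False | Some y \<Rightarrow> cdist n p y < l)}"
    using key_in_window_iff[OF inv p l free_before free_after] by (auto split: option.splits)
  then have keys: "card {s. s < n \<and> cdist n p s < l \<and> T s \<noteq> None} =
      length (filter (\<lambda>h. cdist n p h < l) hs)"
    using card_slots_with[OF slots, of "\<lambda>v. case v of None \<Rightarrow> False | Some y \<Rightarrow> cdist n p y < l"]
    by simp
  have "card {s. s < n \<and> cdist n p s < l \<and> T s \<noteq> None}
      + card {s. s < n \<and> cdist n p s < l \<and> T s = None} =
      card ({s. s < n \<and> cdist n p s < l \<and> T s \<noteq> None}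
        \<union> {s. s < n \<and> cdist n p s < l \<and> T s = None})"
    by (rule card_Un_disjoint[symmetric]) auto
  also have "\<dots> = card {s. s < n \<and> cdist n p s < l}" by (rule arg_cong[where f = card]) auto
  also have "\<dots> = l" using card_cyclic_window[OF p] l by simp
  finally show ?thesis using keys by simp
qed

lemma nearest_free_slots_around:
  fixes T :: table
  assumes ab: "a < b" "b \<le> n" and f: "f < n" "f \<notin> {a..<b}" "T f = None"
  obtains t u where "t + (b - a) + u < n"
    "T ((a + n - 1 - t) mod n) = None" "\<And>k. k < t \<Longrightarrow> T ((a + n - 1 - k) mod n) \<noteq> None"
    "T ((b + u) mod n) = None" "\<And>k. k < u \<Longrightarrow> T ((b + k) mod n) \<noteq> None"
proof -
  define j where "j = (if b \<le> f then f - b else f + n - b)"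
  define i where "i = n - (b - a) - 1 - j"
  have j: "j < n - (b - a)"
  proof (cases "b \<le> f")
    case True
    then have "j = f - b" unfolding j_def by simp
    then show ?thesis using True f(1) ab by linarith
  next
    case False
    then have "j = f + n - b" "f < a" using f(2) unfolding j_def by auto
    then show ?thesis using ab by linarith
  qed
  have bj: "T ((b + j) mod n) = None"
  proof -
    have "(b + j) mod n = f"
      using f(1) ab by (cases "b \<le> f") (auto simp: j_def le_mod_geq)
    then show ?thesis using f(3) by simp
  qed
  have "a + n - 1 - i = b + j" unfolding i_def using j ab by simp
  then have ai: "T ((a + n - 1 - i) mod n) = None" using bj by simp
  define u where "u = (LEAST u. T ((b + u) mod n) = None)"
  define t where "t = (LEAST t. T ((a + n - 1 - t) mod n) = None)"
  have "u \<le> j" "t \<le> i" unfolding u_def t_def using bj ai by (auto intro: Least_le)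
  then have "t + (b - a) + u < n" using j unfolding i_def by simp
  moreover have "T ((a + n - 1 - t) mod n) = None" "T ((b + u) mod n) = None"
    unfolding t_def u_def using ai bj by (auto intro: LeastI)
  moreover have "T ((a + n - 1 - k) mod n) \<noteq> None" if "k < t" for k
    using not_less_Least that unfolding t_def by blast
  moreover have "T ((b + k) mod n) \<noteq> None" if "k < u" for k
    using not_less_Least that unfolding u_def by blast
  ultimately show thesis using that by blast
qed

lemma free_slots_of_extended_window:
  fixes T :: table
  assumes ab: "a < b" "b \<le> n" and tu: "t + (b - a) + u < n"
    and before: "\<And>k. k < t \<Longrightarrow> T ((a + n - 1 - k) mod n) \<noteq> None"
    and after: "\<And>k. k < u \<Longrightarrow> T ((b + k) mod n) \<noteq> None"
  shows "{s. s < n \<and> cdist n ((a + n - t) mod n) s < t + (b - a) + u \<and> T s = None} =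
    free_slots T {a..<b}"
proof -
  define p where "p = (a + n - t) mod n"
  define l where "l = t + (b - a) + u"
  have p: "p < n" unfolding p_def using ab by simp
  have slot: "(p + k) mod n = (a + n - t + k) mod n" for k
    unfolding p_def by (simp add: mod_add_left_eq)
  have inside: "a \<le> s \<and> s < b" if s: "s < n" "cdist n p s < l" "T s = None" for s
  proof -
    define k where "k = cdist n p s"
    have sk: "s = (a + n - t + k) mod n"
      using mod_add_cdist[OF p s(1)] slot unfolding k_def by simp
    have "\<not> k < t"
    proof
      assume "k < t"
      then have "a + n - t + k = a + n - 1 - (t - 1 - k)" using tu by linarith
      then show False using before[of "t - 1 - k"] \<open>k < t\<close> s(3) sk by simp
    qed
    moreover have "\<not> t + (b - a) \<le> k"
    proof
      assume k: "t + (b - a) \<le> k"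
      then have "a + n - t + k = (b + (k - t - (b - a))) + n" using tu ab by linarith
      then have "s = (b + (k - t - (b - a))) mod n" using sk by simp
      moreover have "k - t - (b - a) < u" using s(2) k unfolding k_def l_def by linarith
      ultimately show False using after s(3) by blast
    qed
    ultimately have "a + n - t + k = (a + (k - t)) + n" "a + (k - t) < b" using tu ab by linarith+
    then have "s = a + (k - t)" using sk ab by simp
    then show ?thesis using \<open>a + (k - t) < b\<close> by simp
  qed
  have window: "cdist n p s < l" if s: "a \<le> s" "s < b" for s
  proof -
    have "a + n - t + (s - a + t) = s + n" using s tu by linarith
    then have "(p + (s - a + t)) mod n = s" using slot[of "s - a + t"] s ab by simp
    moreover have "s - a + t < l" "l < n" using s tu unfolding l_def by linarith+
    ultimately show ?thesis using cdist_mod_add[OF p, of "s - a + t"] by simp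
  qed
  show ?thesis
  proof (intro equalityI subsetI)
    fix s
    assume "s \<in> {s. s < n \<and> cdist n ((a + n - t) mod n) s < t + (b - a) + u \<and> T s = None}"
    then show "s \<in> free_slots T {a..<b}"
      using inside unfolding free_slots_def p_def l_def by simp
  next
    fix s assume "s \<in> free_slots T {a..<b}"
    then show "s \<in> {s. s < n \<and> cdist n ((a + n - t) mod n) s < t + (b - a) + u \<and> T s = None}"
      using window ab unfolding free_slots_def p_def l_def by simp
  qed
qed

lemma olp_table_free_slots_cases:
  assumes hs: "set hs \<subseteq> {0..<n}" "length hs < n" and ab: "a < b" "b \<le> n"
  defines "F \<equiv> card (free_slots (olp_table n hs) {a..<b})"
  shows "F = n - length hs \<or> (\<exists>t u. t + (b - a) + u < n \<and>
     length (filter (\<lambda>h. cdist n ((a + n - t) mod n) h < t + (b - a) + u) hs) + F = t + (b - a) + u)"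
proof (cases "\<exists>f<n. f \<notin> {a..<b} \<and> olp_table n hs f = None")
  case False
  then have "free_slots (olp_table n hs) {a..<b} = {s. s < n \<and> olp_table n hs s = None}"
    unfolding free_slots_def using ab by auto
  then show ?thesis
    using card_slots_with[of n "olp_table n hs" hs _ "\<lambda>v. v = None"]
      olp_table_invariant_slot_mset[OF hs] unfolding F_def by simp
next
  case True
  then obtain f where "f < n" "f \<notin> {a..<b}" "olp_table n hs f = None" by blast
  then obtain t u where tu: "t + (b - a) + u < n"
    and free_before: "olp_table n hs ((a + n - 1 - t) mod n) = None"
    and occupied_before: "\<And>k. k < t \<Longrightarrow> olp_table n hs ((a + n - 1 - k) mod n) \<noteq> None"
    and free_after: "olp_table n hs ((b + u) mod n) = None"
    and occupied_after: "\<And>k. k < u \<Longrightarrow> olp_table n hs ((b + k) mod n) \<noteq> None"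
    by (rule nearest_free_slots_around[OF ab]) blast
  define p where "p = (a + n - t) mod n"
  define l where "l = t + (b - a) + u"
  have p: "p < n" and l: "l < n" unfolding p_def l_def using ab tu by simp_all
  have "(p + n - 1) mod n = (p + (n - 1)) mod n" using p by simp
  also have "\<dots> = (a + n - t + (n - 1)) mod n" unfolding p_def by (simp add: mod_add_left_eq)
  also have "a + n - t + (n - 1) = (a + n - 1 - t) + n" using tu by simp
  finally have "olp_table n hs ((p + n - 1) mod n) = None" using free_before by simp
  moreover have "(p + l) mod n = (a + n - t + l) mod n" unfolding p_def by (simp add: mod_add_left_eq)
  moreover have "a + n - t + l = (b + u) + n" using tu ab unfolding l_def by simp
  ultimately have "length (filter (\<lambda>h. cdist n p h < l) hs)
      + card {s. s < n \<and> cdist n p s < l \<and> olp_table n hs s = None} = l"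
    using olp_table_invariant_slot_mset[OF hs] free_after
    by (intro keys_plus_free_slots_in_window[OF _ _ p l]) simp_all
  moreover have "{s. s < n \<and> cdist n p s < l \<and> olp_table n hs s = None} =
      free_slots (olp_table n hs) {a..<b}"
    unfolding p_def l_def by (rule free_slots_of_extended_window[OF ab tu occupied_before occupied_after])
  ultimately show ?thesis using tu unfolding F_def p_def l_def by auto
qed

section \<open>A Chernoff bound for fully random hashes\<close>

lemma sum_lists_length_prod_list:
  fixes f :: "'a \<Rightarrow> 'b::comm_semiring_1"
  shows "(\<Sum>xs | set xs \<subseteq> A \<and> length xs = m. \<Prod>x\<leftarrow>xs. f x) = (\<Sum>x\<in>A. f x) ^ m"
proof (induction m)
  case 0
  have "{xs. set xs \<subseteq> A \<and> length xs = 0} = {[]}" by auto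
  then show ?case by simp
next
  case (Suc m)
  have inj: "inj_on (\<lambda>(xs, x). x # xs) ({xs. set xs \<subseteq> A \<and> length xs = m} \<times> A)"
    by (auto simp: inj_on_def)
  have "(\<Sum>xs | set xs \<subseteq> A \<and> length xs = Suc m. \<Prod>x\<leftarrow>xs. f x)
      = (\<Sum>(xs, x) \<in> {xs. set xs \<subseteq> A \<and> length xs = m} \<times> A. f x * (\<Prod>y\<leftarrow>xs. f y))"
    unfolding lists_length_Suc_eq by (subst sum.reindex[OF inj]) (simp add: case_prod_unfold)
  also have "\<dots> = (\<Sum>xs | set xs \<subseteq> A \<and> length xs = m. \<Sum>x\<in>A. f x * (\<Prod>y\<leftarrow>xs. f y))"
    by (rule sum.cartesian_product[symmetric])
  also have "\<dots> = (\<Sum>xs | set xs \<subseteq> A \<and> length xs = m. (\<Sum>x\<in>A. f x) * (\<Prod>y\<leftarrow>xs. f y))"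
    by (simp add: sum_distrib_right)
  also have "\<dots> = (\<Sum>x\<in>A. f x) ^ Suc m"
    by (simp add: sum_distrib_left[symmetric] Suc.IH)
  finally show ?case .
qed

lemma exp_mult_length_filter:
  "exp (\<theta> * real (length (filter P xs))) = (\<Prod>x\<leftarrow>xs. if P x then exp \<theta> else 1)"
  by (induction xs) (simp_all add: distrib_left exp_add)

lemma sum_indicator_exp:
  "(\<Sum>x\<in>{0..<n}. if P x then exp \<theta> else 1) = real n + real (card {x. x < n \<and> P x}) * (exp \<theta> - 1)"
proof -
  have "(\<Sum>x\<in>{0..<n}. if P x then exp \<theta> else 1) = (\<Sum>x\<in>{0..<n}. 1 + (if P x then exp \<theta> - 1 else 0))"
    by (rule sum.cong) auto
  also have "\<dots> = real n + real (card ({0..<n} \<inter> {x. P x})) * (exp \<theta> - 1)"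
    by (simp add: sum.distrib sum.If_cases)
  also have "{0..<n} \<inter> {x. P x} = {x. x < n \<and> P x}" by auto
  finally show ?thesis .
qed

lemma finite_hash_lists: "finite {hs. length hs = m \<and> set hs \<subseteq> {0..<n :: nat}}"
proof -
  have "finite {hs. set hs \<subseteq> {0..<n} \<and> length hs = m}" by (rule finite_lists_length_eq) simp
  then show ?thesis by (simp add: conj_commute)
qed

lemma set_pmf_hash_dist:
  assumes "0 < n"
  shows "set_pmf (hash_dist n m) = {hs. length hs = m \<and> set hs \<subseteq> {0..<n}}"
proof -
  have "replicate m 0 \<in> {hs. length hs = m \<and> set hs \<subseteq> {0..<n}}"
    using assms by (auto simp: set_replicate_conv_if)
  then show ?thesis unfolding hash_dist_def using finite_hash_lists by (intro set_pmf_of_set) blast+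
qed

lemma prob_length_filter_ge:
  assumes n: "0 < n" and \<theta>: "0 \<le> \<theta>"
  shows "measure_pmf.prob (hash_dist n m) {hs. K \<le> real (length (filter P hs))}
     \<le> exp (- \<theta> * K) * (1 + real (card {x. x < n \<and> P x}) / real n * (exp \<theta> - 1)) ^ m"
proof -
  define S where "S = {hs. set hs \<subseteq> {0..<n} \<and> length hs = m}"
  define E where "E = {hs. K \<le> real (length (filter P hs))}"
  define c where "c = real (card {x. x < n \<and> P x})"
  have S: "finite S" "S \<noteq> {}" "card S = n ^ m"
    unfolding S_def using n
    by (auto simp: finite_lists_length_eq card_lists_length_eq intro!: exI[of _ "replicate m 0"])
  have "hash_dist n m = pmf_of_set S" unfolding hash_dist_def S_def by (metis conj_commute)
  then have prob: "measure_pmf.prob (hash_dist n m) E = real (card (S \<inter> E)) / real n ^ m"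
    using S by (simp add: measure_pmf_of_set)
  text \<open>Markov's inequality for the exponential moment.\<close>
  have "real (card (S \<inter> E)) = (\<Sum>hs\<in>S \<inter> E. 1)" by simp
  also have "\<dots> \<le> (\<Sum>hs\<in>S \<inter> E. exp (\<theta> * (real (length (filter P hs)) - K)))"
    using \<theta> by (intro sum_mono) (auto simp: E_def)
  also have "\<dots> \<le> (\<Sum>hs\<in>S. exp (\<theta> * (real (length (filter P hs)) - K)))"
    using S by (intro sum_mono2) auto
  also have "\<dots> = exp (- \<theta> * K) * (\<Sum>hs\<in>S. \<Prod>x\<leftarrow>hs. if P x then exp \<theta> else 1)"
    by (simp add: sum_distrib_left right_diff_distrib exp_diff exp_minus exp_mult_length_filter
        field_simps)
  also have "\<dots> = exp (- \<theta> * K) * (real n + c * (exp \<theta> - 1)) ^ m"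
    unfolding S_def sum_lists_length_prod_list sum_indicator_exp c_def ..
  finally have "real (card (S \<inter> E)) / real n ^ m \<le> exp (- \<theta> * K) * ((real n + c * (exp \<theta> - 1)) / real n) ^ m"
    using n by (simp add: divide_right_mono power_divide)
  also have "(real n + c * (exp \<theta> - 1)) / real n = 1 + c / real n * (exp \<theta> - 1)"
    using n by (simp add: field_simps)
  finally show ?thesis using prob unfolding E_def c_def by simp
qed

lemma prob_window_overfull:
  assumes mn: "m < n" and p: "p < n" and l: "l < n"
  defines "\<epsilon> \<equiv> 1 - real m / real n"
  shows "measure_pmf.prob (hash_dist n m)
      {hs. (1 - \<epsilon> / 2) * real l \<le> real (length (filter (\<lambda>h. cdist n p h < l) hs))}
    \<le> exp (- (\<epsilon>\<^sup>2 / 16) * real l)"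
proof -
  have n: "0 < n" using mn by simp
  have eps: "0 < \<epsilon>" "\<epsilon> \<le> 1" unfolding \<epsilon>_def using mn by (auto simp: field_simps)
  define \<theta> where "\<theta> = \<epsilon> / 4"
  have \<theta>: "0 \<le> \<theta>" "\<theta> \<le> 1" unfolding \<theta>_def using eps by auto
  define z where "z = real l / real n * (exp \<theta> - 1)"
  have "measure_pmf.prob (hash_dist n m)
      {hs. (1 - \<epsilon> / 2) * real l \<le> real (length (filter (\<lambda>h. cdist n p h < l) hs))}
     \<le> exp (- \<theta> * ((1 - \<epsilon> / 2) * real l)) * (1 + z) ^ m"
    using prob_length_filter_ge[OF n \<theta>(1), of m _ "\<lambda>h. cdist n p h < l"]
      card_cyclic_window[OF p] l unfolding z_def by simp
  also have "(1 + z) ^ m \<le> exp z ^ m"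
    using \<theta> exp_ge_add_one_self[of z] by (intro power_mono) (auto simp: z_def)
  also have "exp z ^ m = exp (real m * z)" by (simp add: exp_of_nat_mult)
  also have "exp (- \<theta> * ((1 - \<epsilon> / 2) * real l)) * exp (real m * z)
      = exp (- \<theta> * ((1 - \<epsilon> / 2) * real l) + real m * z)"
    by (rule exp_add[symmetric])
  also have "\<dots> \<le> exp (- (\<epsilon>\<^sup>2 / 16) * real l)"
  proof -
    have "real m * z = (1 - \<epsilon>) * real l * (exp \<theta> - 1)"
      unfolding z_def \<epsilon>_def using n by (simp add: field_simps)
    also have "\<dots> \<le> (1 - \<epsilon>) * real l * (\<theta> + \<theta>\<^sup>2)"
      using exp_bound[OF \<theta>] eps by (intro mult_left_mono) auto
    finally have "- \<theta> * ((1 - \<epsilon> / 2) * real l) + real m * z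
        \<le> real l * (- \<epsilon>\<^sup>2 / 8 + (1 - \<epsilon>) * \<epsilon>\<^sup>2 / 16)"
      unfolding \<theta>_def by (simp add: power2_eq_square field_simps)
    also have "\<dots> \<le> - (\<epsilon>\<^sup>2 / 16) * real l"
      using eps by (simp add: power2_eq_square field_simps mult_left_mono)
    finally show ?thesis by simp
  qed
  finally show ?thesis by (simp add: mult_left_mono)
qed

section \<open>Few free slots are unlikely\<close>

lemma few_free_slots_imp_window_overfull:
  assumes hs: "set hs \<subseteq> {0..<n}" "length hs = m" and mn: "m < n" and ab: "a < b" "b \<le> n"
  defines "\<epsilon> \<equiv> 1 - real m / real n"
  assumes few: "real (card (free_slots (olp_table n hs) {a..<b})) < 1/2 * \<epsilon> * real (b - a)"
  obtains t u where "t + (b - a) + u < n"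
    "(1 - \<epsilon> / 2) * real (t + (b - a) + u)
      \<le> real (length (filter (\<lambda>h. cdist n ((a + n - t) mod n) h < t + (b - a) + u) hs))"
proof -
  define F where "F = card (free_slots (olp_table n hs) {a..<b})"
  have eps: "0 < \<epsilon>" "\<epsilon> \<le> 1" unfolding \<epsilon>_def using mn by (auto simp: field_simps)
  have "F \<noteq> n - m"
  proof
    assume "F = n - m"
    then have "real F = \<epsilon> * real n" using mn unfolding \<epsilon>_def by (simp add: of_nat_diff field_simps)
    moreover have "\<epsilon> * real (b - a) \<le> \<epsilon> * real n" using ab eps by simp
    ultimately show False using few eps unfolding F_def by simp
  qed
  then obtain t u where tu: "t + (b - a) + u < n" and
    count: "length (filter (\<lambda>h. cdist n ((a + n - t) mod n) h < t + (b - a) + u) hs) + F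
      = t + (b - a) + u"
    using olp_table_free_slots_cases[OF hs(1) _ ab] hs(2) mn unfolding F_def by auto
  define l where "l = t + (b - a) + u"
  define k where "k = length (filter (\<lambda>h. cdist n ((a + n - t) mod n) h < l) hs)"
  have "real k + real F = real l" using count unfolding k_def l_def by (metis of_nat_add)
  moreover have "real (b - a) \<le> real l" unfolding l_def by simp
  then have "1/2 * \<epsilon> * real (b - a) \<le> 1/2 * \<epsilon> * real l" using eps by (intro mult_left_mono) auto
  moreover have "(1 - \<epsilon> / 2) * real l = real l - 1/2 * \<epsilon> * real l" by (simp add: algebra_simps)
  ultimately have "(1 - \<epsilon> / 2) * real l \<le> real k" using few unfolding F_def by linarith
  then show thesis using tu that unfolding k_def l_def by blast
qed

lemma sum_exp_neg_le:
  fixes \<kappa> :: real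
  assumes "0 < \<kappa>" "\<kappa> \<le> 1"
  shows "(\<Sum>i<N. exp (- \<kappa>) ^ i) \<le> 2 / \<kappa>"
proof -
  have "exp \<kappa> \<ge> 1 + \<kappa>" by (rule exp_ge_add_one_self)
  then have "1 - exp (- \<kappa>) \<ge> \<kappa> / (1 + \<kappa>)" using assms by (simp add: exp_minus field_simps)
  moreover have "\<kappa> / (1 + \<kappa>) \<ge> \<kappa> / 2" using assms by (intro divide_left_mono) auto
  ultimately have gap: "1 - exp (- \<kappa>) \<ge> \<kappa> / 2" by linarith
  have "exp (- \<kappa>) < 1" using assms by simp
  then have "(\<Sum>i<N. exp (- \<kappa>) ^ i) = (1 - exp (- \<kappa>) ^ N) / (1 - exp (- \<kappa>))"
    by (simp add: sum_gp_strict)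
  also have "\<dots> \<le> 1 / (1 - exp (- \<kappa>))"
    using \<open>exp (- \<kappa>) < 1\<close> by (simp add: divide_right_mono)
  also have "\<dots> \<le> 1 / (\<kappa> / 2)" using gap assms by (intro divide_left_mono) auto
  finally show ?thesis by simp
qed

lemma sum_window_weights_le:
  fixes \<kappa> :: real
  assumes "0 < \<kappa>" "\<kappa> \<le> 1"
  shows "(\<Sum>(t, u)\<in>{(t, u). t + L + u < n}. exp (- \<kappa> * real (t + L + u)))
    \<le> 4 / \<kappa>\<^sup>2 * exp (- \<kappa> * real L)"
proof -
  have "(\<Sum>(t, u)\<in>{(t, u). t + L + u < n}. exp (- \<kappa> * real (t + L + u)))
      \<le> (\<Sum>(t, u)\<in>{..<n} \<times> {..<n}. exp (- \<kappa> * real (t + L + u)))"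
    by (rule sum_mono2) auto
  also have "\<dots> = (\<Sum>(t, u)\<in>{..<n} \<times> {..<n}. exp (- \<kappa> * real L) * (exp (- \<kappa>) ^ t * exp (- \<kappa>) ^ u))"
    by (rule sum.cong) (auto simp: exp_of_nat_mult[symmetric] exp_add[symmetric] algebra_simps)
  also have "\<dots> = (\<Sum>t<n. \<Sum>u<n. exp (- \<kappa> * real L) * (exp (- \<kappa>) ^ t * exp (- \<kappa>) ^ u))"
    by (rule sum.cartesian_product[symmetric])
  also have "\<dots> = exp (- \<kappa> * real L) * (\<Sum>t<n. \<Sum>u<n. exp (- \<kappa>) ^ t * exp (- \<kappa>) ^ u)"
    by (simp add: sum_distrib_left)
  also have "\<dots> = exp (- \<kappa> * real L) * ((\<Sum>t<n. exp (- \<kappa>) ^ t) * (\<Sum>u<n. exp (- \<kappa>) ^ u))"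
    by (simp only: sum_product)
  also have "\<dots> \<le> exp (- \<kappa> * real L) * ((2 / \<kappa>) * (2 / \<kappa>))"
    using sum_exp_neg_le[OF assms] assms by (intro mult_left_mono mult_mono) (auto intro: sum_nonneg)
  also have "\<dots> = 4 / \<kappa>\<^sup>2 * exp (- \<kappa> * real L)" by (simp add: power2_eq_square)
  finally show ?thesis .
qed

lemma prob_few_free_slots_le:
  assumes mn: "m < n" and ab: "a < b" "b \<le> n"
  defines "\<epsilon> \<equiv> 1 - real m / real n"
  shows "measure_pmf.prob (hash_dist n m)
      {hs. real (card (free_slots (olp_table n hs) {a..<b})) < 1/2 * \<epsilon> * real (b - a)}
    \<le> 4 / (\<epsilon>\<^sup>2 / 16)\<^sup>2 * exp (- (\<epsilon>\<^sup>2 / 16) * real (b - a))"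
proof -
  define L where "L = b - a"
  define \<kappa> where "\<kappa> = \<epsilon>\<^sup>2 / 16"
  define I where "I = {(t, u). t + L + u < n}"
  define E where "E = (\<lambda>(t, u). {hs. (1 - \<epsilon> / 2) * real (t + L + u) \<le>
      real (length (filter (\<lambda>h. cdist n ((a + n - t) mod n) h < t + L + u) hs))})"
  define B where "B = {hs. real (card (free_slots (olp_table n hs) {a..<b})) < 1/2 * \<epsilon> * real L}"
  have n: "0 < n" using mn by simp
  have eps: "0 < \<epsilon>" "\<epsilon> \<le> 1" unfolding \<epsilon>_def using mn by (auto simp: field_simps)
  have \<kappa>: "0 < \<kappa>" "\<kappa> \<le> 1" unfolding \<kappa>_def using eps power_le_one[of \<epsilon> 2] by auto
  have finI: "finite I" by (rule finite_subset[of _ "{..<n} \<times> {..<n}"]) (auto simp: I_def)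
  have "B \<inter> set_pmf (hash_dist n m) \<subseteq> (\<Union>i\<in>I. E i)"
  proof
    fix hs assume "hs \<in> B \<inter> set_pmf (hash_dist n m)"
    then have "set hs \<subseteq> {0..<n}" "length hs = m"
      "real (card (free_slots (olp_table n hs) {a..<b})) < 1/2 * \<epsilon> * real (b - a)"
      unfolding B_def set_pmf_hash_dist[OF n] L_def by auto
    from few_free_slots_imp_window_overfull[OF this(1,2) mn ab, folded \<epsilon>_def, OF this(3)]
    show "hs \<in> (\<Union>i\<in>I. E i)" unfolding I_def E_def L_def by blast
  qed
  then have "measure_pmf.prob (hash_dist n m) (B \<inter> set_pmf (hash_dist n m))
      \<le> measure_pmf.prob (hash_dist n m) (\<Union>i\<in>I. E i)"
    by (rule measure_pmf.finite_measure_mono) simp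
  then have "measure_pmf.prob (hash_dist n m) B \<le> measure_pmf.prob (hash_dist n m) (\<Union>i\<in>I. E i)"
    by (simp add: measure_Int_set_pmf)
  also have "\<dots> \<le> (\<Sum>i\<in>I. measure_pmf.prob (hash_dist n m) (E i))"
    by (rule measure_pmf.finite_measure_subadditive_finite[OF finI]) simp
  also have "\<dots> \<le> (\<Sum>(t, u)\<in>I. exp (- \<kappa> * real (t + L + u)))"
  proof (rule sum_mono)
    fix i assume "i \<in> I"
    then obtain t u where i: "i = (t, u)" "t + L + u < n" unfolding I_def by auto
    have "(a + n - t) mod n < n" using n by simp
    from prob_window_overfull[OF mn this i(2)]
    show "measure_pmf.prob (hash_dist n m) (E i) \<le> (case i of (t, u) \<Rightarrow> exp (- \<kappa> * real (t + L + u)))"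
      unfolding i E_def \<kappa>_def \<epsilon>_def by simp
  qed
  also have "\<dots> \<le> 4 / \<kappa>\<^sup>2 * exp (- \<kappa> * real L)"
    unfolding I_def by (rule sum_window_weights_le[OF \<kappa>])
  finally show ?thesis unfolding B_def \<kappa>_def L_def .
qed

lemma mult_ln_le_half:
  fixes x c :: real
  assumes "0 < x" "0 < c"
  shows "c * ln x \<le> c * ln (2 * c) + x / 2"
proof -
  have "ln (x / (2 * c)) \<le> x / (2 * c) - 1" using assms by (intro ln_le_minus_one) auto
  then have "ln x \<le> ln (2 * c) + x / (2 * c)" using assms by (simp add: ln_div)
  then show ?thesis using assms by (simp add: field_simps mult_left_mono)
qed

lemma window_tail_le_powr:
  fixes \<epsilon> L c c' :: real
  assumes eps: "0 < \<epsilon>" "\<epsilon> \<le> 1" and L: "1 \<le> L" and c': "0 < c'"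
    and c: "32 * (4 + 2 * c') \<le> c"
    and long: "c * \<epsilon> powr (-2) * ln (1 / \<epsilon>) \<le> L"
  shows "4 / (\<epsilon>\<^sup>2 / 16)\<^sup>2 * exp (- (\<epsilon>\<^sup>2 / 16) * L) \<le> 1024 * (32 * c') powr c' * L powr (- c')"
proof -
  define x where "x = \<epsilon>\<^sup>2 / 16 * L"
  define y where "y = ln (1 / \<epsilon>)"
  have x: "0 < x" unfolding x_def using eps L by simp
  have ey: "exp y = 1 / \<epsilon>" unfolding y_def using eps by simp
  have y: "0 \<le> y" unfolding y_def using eps by simp
  have "c * y \<le> 16 * x"
    using long eps unfolding x_def y_def by (simp add: powr_minus powr_realpow field_simps)
  moreover have "128 * y + 64 * (c' * y) \<le> c * y"
    using mult_right_mono[OF c y] by (simp add: algebra_simps)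
  ultimately have "4 * y + 2 * (c' * y) \<le> x / 2" by linarith
  moreover have "c' * ln x \<le> c' * ln (2 * c') + x / 2" using mult_ln_le_half[OF x c'] .
  moreover have "c' * ln L = c' * ln 16 + c' * ln x + 2 * (c' * y)"
  proof -
    have "L = 16 * x * exp y ^ 2" unfolding x_def ey using eps by (simp add: field_simps power2_eq_square)
    then have "ln L = ln 16 + ln x + 2 * y" using x by (simp add: ln_mult ln_realpow)
    then show ?thesis by (simp add: algebra_simps)
  qed
  moreover have "ln (32 * c') = ln 16 + ln (2 * c')" using c' ln_mult[of 16 "2 * c'"] by simp
  then have "c' * ln (32 * c') = c' * ln 16 + c' * ln (2 * c')" by (simp add: distrib_left)
  ultimately have "ln 1024 + 4 * y - x \<le> ln 1024 + c' * ln (32 * c') - c' * ln L" by linarith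
  moreover have "exp (ln 1024 + 4 * y - x) = 1024 * exp y ^ 4 * exp (- x)"
    by (simp add: exp_add exp_diff exp_minus exp_of_nat_mult[symmetric] field_simps)
  then have "4 / (\<epsilon>\<^sup>2 / 16)\<^sup>2 * exp (- (\<epsilon>\<^sup>2 / 16) * L) = exp (ln 1024 + 4 * y - x)"
    unfolding ey x_def using eps by (simp add: field_simps power2_eq_square power4_eq_xxxx)
  moreover have "1024 * (32 * c') powr c' * L powr (- c') = exp (ln 1024 + c' * ln (32 * c') - c' * ln L)"
    using c' L by (simp add: powr_def exp_add exp_diff exp_minus field_simps)
  ultimately show ?thesis by simp
qed

lemma prob_few_free_slots_le_powr:
  fixes c c' :: real
  assumes c': "0 < c'" and c: "32 * (4 + 2 * c') \<le> c" and mn: "m < n" and ab: "a < b" "b \<le> n"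
  defines "\<epsilon> \<equiv> 1 - real m / real n"
  assumes long: "c * \<epsilon> powr (-2) * ln (1 / \<epsilon>) \<le> real (b - a)"
  shows "measure_pmf.prob (hash_dist n m)
      {hs. real (card (free_slots (olp_table n hs) {a..<b})) < 1/2 * \<epsilon> * real (b - a)}
    \<le> 1024 * (32 * c') powr c' * real (b - a) powr (- c')"
proof -
  have "0 < \<epsilon>" "\<epsilon> \<le> 1" unfolding \<epsilon>_def using mn by (auto simp: field_simps)
  moreover have "1 \<le> real (b - a)" using ab by simp
  ultimately show ?thesis
    using prob_few_free_slots_le[OF mn ab, folded \<epsilon>_def] window_tail_le_powr[OF _ _ _ c' c long]
    by (meson order.trans)
qed

theorem mainTheorem9:
  "\<exists>\<delta>>0. \<forall>c'>0. \<exists>c0>0. \<forall>c\<ge>c0. \<exists>C>0.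
     \<forall>n m a b. m < n \<longrightarrow> a < b \<longrightarrow> b \<le> n \<longrightarrow>
       (let \<epsilon> = 1 - real m / real n in
        real (b - a) \<ge> c * \<epsilon> powr (-2) * ln (1 / \<epsilon>) \<longrightarrow>
        measure_pmf.prob (hash_dist n m)
          {hs. real (card (free_slots (olp_table n hs) {a..<b})) < \<delta> * \<epsilon> * real (b - a)}
        \<le> C * real (b - a) powr (- c'))"
  unfolding Let_def
  apply (rule exI[of _ "1/2"])
  apply (intro conjI allI impI)
   apply simp
  subgoal for c'
    apply (rule exI[of _ "32 * (4 + 2 * c')"])
    apply (intro conjI allI impI)
     apply simp
    subgoal for c
      by (intro exI[of _ "1024 * (32 * c') powr c'"] conjI allI impI prob_few_free_slots_le_powr)
        simp_all
    done
  done

end
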